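(* Let $\{i,j,k\}=\{1,2,3\}$, let $S$ be a word directed toward $i$ and $T$ a word directed toward $j$ (with $i\neq j$). Then, up to applications of rule (8), the word $S^{-1}T$ has at most one factorization under the local algorithm $A$, and it is of the form $T_1S_1^{-1}$, where $S_1$ is directed toward $i$ and $T_1$ is directed toward $j$.
   Context: For distinct $a,b\in\{1,2,3\}$, $E_{ab}$ denotes the $3\times 3$ elementary matrix that differs from the identity by an entry $1$ at position $(a,b)$, and $E_{ab}^{-1}$ its inverse; for a permutation $(a,b,c)$ of $(1,2,3)$, $R_{abc}$ denotes the symbol of the cyclic permutation $r$ of indices with $c\mapsto b\mapsto a\mapsto c$. For a word $S=X_1\cdots X_n$ of letters $E_{ab}$, $S^{-1}=X_n^{-1}\cdots X_1^{-1}$. A word is directed toward $i$ if it consists only of letters $E_{ij}$ and $E_{ik}$ ($\{i,j,k\}=\{1,2,3\}$). Local algorithm $A$ acts on finite words by repeatedly replacing subwords by the rules (for $\{i,j,k\}=\{1,2,3\}$): (1) $E^{-1}_{ij}E_{ji}\Rightarrow$ stop; (2) $E^{-1}_{ij}E_{ij}\Rightarrow 1$; (3) $E^{-1}_{ij}E_{kj}\Rightarrow E_{kj}E^{-1}_{ij}$; (4) $E^{-1}_{ij}E_{jk}\Rightarrow E_{jk}E^{-1}_{ik}E^{-1}_{ij}$; (5) $E^{-1}_{ij}E_{ki}\Rightarrow E_{ki}E_{kj}E^{-1}_{ij}$; (6a) $E^{-1}_{ij}E_{ik}\Rightarrow E_{ik}E^{-1}_{ij}$ or alternatively (6b) $E^{-1}_{ij}E_{ik}\Rightarrow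 E_{ki}E_{jk}R_{kji}E^{-1}_{kj}E^{-1}_{ji}$; (7) $R_{kji}E_{lm}^{\pm1}\Rightarrow E_{r(l)r(m)}^{\pm1}R_{kji}$ with $r:i\mapsto j\mapsto k\mapsto i$. In addition the rule (8) $E_{ij}E_{ik}\Rightarrow E_{ik}E_{ij}$ may be used. Permutation symbols can be moved using rule (7). The order of places at which rules are applied is fixed; the only choices are between (6a) and (6b). A factorization of a word $W$ is the final word of a run of the algorithm on $W$ that terminates without applying rule (1), i.e. ends with a word $T'S'^{-1}$ where $T'$ contains no inverse letters and $S'$ consists of letters $E_{ab}$. *)

theory Defs
  imports Main
begin

datatype idx = I1 | I2 | I3

text \<open>E a b is the elementary matrix E_ab, Einv a b its inverse E_ab^{-1},
  and R a b c is the permutation symbol R_abc (cyclic permutation c -> b -> a -> c).\<close>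
datatype letter = E idx idx | Einv idx idx | R idx idx idx

type_synonym word = "letter list"

definition cyc :: "idx \<Rightarrow> idx \<Rightarrow> idx \<Rightarrow> idx \<Rightarrow> idx" where
  "cyc a b c x = (if x = c then b else if x = b then a else c)"

fun inv_letter :: "letter \<Rightarrow> letter" where
  "inv_letter (E a b) = Einv a b"
| "inv_letter (Einv a b) = E a b"
| "inv_letter (R a b c) = R a b c"

definition inv_word :: "word \<Rightarrow> word" where
  "inv_word S = rev (map inv_letter S)"

definition is_E :: "letter \<Rightarrow> bool" where
  "is_E x \<longleftrightarrow> (\<exists>a b. a \<noteq> b \<and> x = E a b)"

definition is_Einv :: "letter \<Rightarrow> bool" where
  "is_Einv x \<longleftrightarrow> (\<exists>a b. x = Einv a b)"

definition E_word :: "word \<Rightarrow> bool" where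
  "E_word S \<longleftrightarrow> (\<forall>x\<in>set S. is_E x)"

definition directed :: "idx \<Rightarrow> word \<Rightarrow> bool" where
  "directed i S \<longleftrightarrow> (\<forall>x\<in>set S. \<exists>j. j \<noteq> i \<and> x = E i j)"

text \<open>Rule (1): the stop pattern.\<close>
definition stop_pat :: "letter \<Rightarrow> letter \<Rightarrow> bool" where
  "stop_pat x y \<longleftrightarrow> (\<exists>i j. i \<noteq> j \<and> x = Einv i j \<and> y = E j i)"

text \<open>Rules (2)--(7) (both alternatives (6a) and (6b)); arule x y rhs means the
  two-letter subword x y may be replaced by rhs.\<close>
inductive arule :: "letter \<Rightarrow> letter \<Rightarrow> word \<Rightarrow> bool" where
  r2:  "distinct [i, j, k] \<Longrightarrow> arule (Einv i j) (E i j) []"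
| r3:  "distinct [i, j, k] \<Longrightarrow> arule (Einv i j) (E k j) [E k j, Einv i j]"
| r4:  "distinct [i, j, k] \<Longrightarrow> arule (Einv i j) (E j k) [E j k, Einv i k, Einv i j]"
| r5:  "distinct [i, j, k] \<Longrightarrow> arule (Einv i j) (E k i) [E k i, E k j, Einv i j]"
| r6a: "distinct [i, j, k] \<Longrightarrow> arule (Einv i j) (E i k) [E i k, Einv i j]"
| r6b: "distinct [i, j, k] \<Longrightarrow>
          arule (Einv i j) (E i k) [E k i, E j k, R k j i, Einv k j, Einv j i]"
| r7p: "distinct [i, j, k] \<Longrightarrow>
          arule (R k j i) (E l m) [E (cyc k j i l) (cyc k j i m), R k j i]"
| r7n: "distinct [i, j, k] \<Longrightarrow>
          arule (R k j i) (Einv l m) [Einv (cyc k j i l) (cyc k j i m), R k j i]"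

definition redex :: "word \<Rightarrow> nat \<Rightarrow> bool" where
  "redex w p \<longleftrightarrow> Suc p < length w \<and>
     (stop_pat (w ! p) (w ! Suc p) \<or> (\<exists>rhs. arule (w ! p) (w ! Suc p) rhs))"

definition replace_at :: "word \<Rightarrow> nat \<Rightarrow> word \<Rightarrow> word" where
  "replace_at w p rhs = take p w @ rhs @ drop (Suc (Suc p)) w"

definition rule8 :: "word \<Rightarrow> word \<Rightarrow> bool" where
  "rule8 w w' \<longleftrightarrow> (\<exists>p i j k. distinct [i, j, k] \<and> Suc p < length w \<and>
      w ! p = E i j \<and> w ! Suc p = E i k \<and> w' = replace_at w p [E i k, E i j])"

definition eq8 :: "word \<Rightarrow> word \<Rightarrow> bool" where
  "eq8 = rule8\<^sup>*\<^sup>*"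

text \<open>A fixed order of places: sel w is the place at which the next rule is
  applied; it must be a place where a rule applies whenever there is one.\<close>
definition admissible_order :: "(word \<Rightarrow> nat) \<Rightarrow> bool" where
  "admissible_order sel \<longleftrightarrow> (\<forall>w. (\<exists>p. redex w p) \<longrightarrow> redex w (sel w))"

text \<open>One step of algorithm A with order sel: apply a rule (2)--(7) at the
  prescribed place (the only choice being (6a) versus (6b)), or apply rule (8).
  Rule (1) is not a step: a run reaching it stops without a factorization.\<close>
definition astep :: "(word \<Rightarrow> nat) \<Rightarrow> word \<Rightarrow> word \<Rightarrow> bool" where
  "astep sel w w' \<longleftrightarrow>
     (Suc (sel w) < length w \<and>
      (\<exists>rhs. arule (w ! sel w) (w ! Suc (sel w)) rhs \<and> w' = replace_at w (sel w) rhs))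
     \<or> rule8 w w'"

definition terminal :: "word \<Rightarrow> bool" where
  "terminal w \<longleftrightarrow> (\<forall>p. \<not> redex w p)"

definition factorization :: "(word \<Rightarrow> nat) \<Rightarrow> word \<Rightarrow> word \<Rightarrow> bool" where
  "factorization sel W F \<longleftrightarrow> (astep sel)\<^sup>*\<^sup>* W F \<and> terminal F \<and>
     (\<exists>T' S'. F = T' @ inv_word S' \<and> (\<forall>x\<in>set T'. \<not> is_Einv x) \<and> E_word S')"

end

theory Submission
  imports Defs
begin

text \<open>Pick k with \<open>{i,j,k} = {1,2,3}\<close>. The word \<open>S\<^sup>-\<^sup>1T\<close> is written in the four letters
  \<open>E\<^sup>-\<^sup>1\<^sub>i\<^sub>j, E\<^sup>-\<^sup>1\<^sub>i\<^sub>k, E\<^sub>j\<^sub>i, E\<^sub>j\<^sub>k\<close>, and every rule applicable to two of them, including (8),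
  produces only these letters again; (6b) never fires, since \<open>E\<^sub>i\<^sub>k\<close> does not occur.
  A terminal word over this alphabet has no inverse letter directly before a letter
  \<open>E\<^sub>j\<^sub>*\<close>, so it is \<open>T\<^sub>1S\<^sub>1\<^sup>-\<^sup>1\<close> with \<open>T\<^sub>1\<close> directed toward j and \<open>S\<^sub>1\<close> toward i.
  For uniqueness, if some \<open>E\<^sup>-\<^sup>1\<^sub>i\<^sub>j\<close> stands before some \<open>E\<^sub>j\<^sub>i\<close>, the number of such pairs is
  invariant, so every run ends with rule (1). Otherwise one of \<open>E\<^sup>-\<^sup>1\<^sub>i\<^sub>j\<close>, \<open>E\<^sub>j\<^sub>i\<close> is absent,
  and invariants of the rewriting determine the final word: up to the order of its
  letters \<open>E\<^sub>j\<^sub>*\<close> if \<open>E\<^sup>-\<^sup>1\<^sub>i\<^sub>j\<close> is absent, exactly if \<open>E\<^sub>j\<^sub>i\<close> is absent.\<close>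

lemma idx_cases3: "distinct [i, j, k] \<Longrightarrow> (x::idx) = i \<or> x = j \<or> x = k"
  by (cases i; cases j; cases k; cases x) auto

lemma ex_third_idx: "(i::idx) \<noteq> j \<Longrightarrow> \<exists>k. distinct [i, j, k]"
  by (cases i; cases j) (auto intro: exI[of _ I1] exI[of _ I2] exI[of _ I3])

lemma id_take_nth_nth_drop: "Suc p < length w \<Longrightarrow> w = take p w @ w ! p # w ! Suc p # drop (Suc (Suc p)) w"
  by (metis Cons_nth_drop_Suc Suc_lessD append_take_drop_id)

lemma replace_at_split2: "replace_at (u @ x # y # v) (length u) r = u @ r @ v"
  by (simp add: replace_at_def)

section \<open>The alphabet of \<open>S\<^sup>-\<^sup>1T\<close> and the rules acting on it\<close>

definition alphabet :: "idx \<Rightarrow> idx \<Rightarrow> idx \<Rightarrow> letter set" where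
  "alphabet i j k = {Einv i j, Einv i k, E j i, E j k}"

text \<open>The first three lines are rules (4), (5) and (3); the last two are rule (8).\<close>
definition alphabet_rule :: "idx \<Rightarrow> idx \<Rightarrow> idx \<Rightarrow> letter \<Rightarrow> letter \<Rightarrow> word \<Rightarrow> bool" where
  "alphabet_rule i j k x y r \<longleftrightarrow>
     (x = Einv i j \<and> y = E j k \<and> r = [E j k, Einv i k, Einv i j]) \<or>
     (x = Einv i k \<and> y = E j i \<and> r = [E j i, E j k, Einv i k]) \<or>
     (x = Einv i k \<and> y = E j k \<and> r = [E j k, Einv i k]) \<or>
     (x = E j i \<and> y = E j k \<and> r = [E j k, E j i]) \<or>
     (x = E j k \<and> y = E j i \<and> r = [E j i, E j k])"

lemma alphabet_rule_set: "alphabet_rule i j k x y r \<Longrightarrow> set r \<subseteq> alphabet i j k"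
  unfolding alphabet_rule_def alphabet_def by auto

lemma arule_alphabet_rule:
  "\<lbrakk>distinct [i, j, k]; x \<in> alphabet i j k; y \<in> alphabet i j k; arule x y r\<rbrakk>
    \<Longrightarrow> alphabet_rule i j k x y r"
  unfolding alphabet_def alphabet_rule_def by (elim arule.cases) auto

lemma rule8_alphabet_rule:
  "\<lbrakk>distinct [i, j, k]; E a b \<in> alphabet i j k; E a c \<in> alphabet i j k; distinct [a, b, c]\<rbrakk>
    \<Longrightarrow> alphabet_rule i j k (E a b) (E a c) [E a c, E a b]"
  unfolding alphabet_def alphabet_rule_def by auto

lemma rule8_iff: "rule8 w w' \<longleftrightarrow> (\<exists>u a b c v. distinct [a, b, c] \<and>
    w = u @ E a b # E a c # v \<and> w' = u @ E a c # E a b # v)"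
proof
  assume "rule8 w w'"
  then obtain p a b c where abc: "distinct [a, b, c]" and p: "Suc p < length w"
    and "w ! p = E a b" "w ! Suc p = E a c" and w': "w' = replace_at w p [E a c, E a b]"
    unfolding rule8_def by blast
  then have "w = take p w @ E a b # E a c # drop (Suc (Suc p)) w" using id_take_nth_nth_drop[OF p] by simp
  moreover have "w' = take p w @ E a c # E a b # drop (Suc (Suc p)) w"
    using w' by (simp add: replace_at_def)
  ultimately show "\<exists>u a b c v. distinct [a, b, c] \<and> w = u @ E a b # E a c # v \<and> w' = u @ E a c # E a b # v"
    using abc by blast
next
  assume "\<exists>u a b c v. distinct [a, b, c] \<and> w = u @ E a b # E a c # v \<and> w' = u @ E a c # E a b # v"
  then obtain u a b c v where "distinct [a, b, c]" "w = u @ E a b # E a c # v"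
    "w' = u @ E a c # E a b # v" by blast
  then show "rule8 w w'"
    unfolding rule8_def
    by (intro exI[of _ "length u"] exI[of _ a] exI[of _ b] exI[of _ c])
      (simp add: nth_append replace_at_split2)
qed

lemma astep_alphabet_rule:
  assumes "distinct [i, j, k]" and "astep sel w w'" and "set w \<subseteq> alphabet i j k"
  shows "\<exists>u x y v r. w = u @ x # y # v \<and> w' = u @ r @ v \<and> alphabet_rule i j k x y r"
  using assms(2) unfolding astep_def
proof
  assume "Suc (sel w) < length w \<and>
      (\<exists>rhs. arule (w ! sel w) (w ! Suc (sel w)) rhs \<and> w' = replace_at w (sel w) rhs)"
  then obtain r where p: "Suc (sel w) < length w" and "arule (w ! sel w) (w ! Suc (sel w)) r"
    and w': "w' = replace_at w (sel w) r" by blast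
  moreover have "w ! sel w \<in> alphabet i j k" "w ! Suc (sel w) \<in> alphabet i j k"
    using assms(3) p by (auto simp: subset_iff)
  ultimately have "alphabet_rule i j k (w ! sel w) (w ! Suc (sel w)) r"
    using arule_alphabet_rule[OF assms(1)] by blast
  then show ?thesis using id_take_nth_nth_drop[OF p] w' unfolding replace_at_def by blast
next
  assume "rule8 w w'"
  then obtain u a b c v where abc: "distinct [a, b, c]" and w: "w = u @ E a b # E a c # v"
    and w': "w' = u @ E a c # E a b # v" unfolding rule8_iff by blast
  have "E a b \<in> alphabet i j k" "E a c \<in> alphabet i j k" using assms(3) w by auto
  then have "alphabet_rule i j k (E a b) (E a c) [E a c, E a b]"
    using rule8_alphabet_rule[OF assms(1) _ _ abc] by blast
  moreover have "w' = u @ [E a c, E a b] @ v" using w' by simp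
  ultimately show ?thesis using w by blast
qed

lemma astep_invariant:
  assumes "(astep sel)\<^sup>*\<^sup>* W F" and "distinct [i, j, k]"
    and "set W \<subseteq> alphabet i j k" and "P W"
    and "\<And>u x y v r. alphabet_rule i j k x y r \<Longrightarrow> P (u @ x # y # v) \<Longrightarrow> P (u @ r @ v)"
  shows "P F \<and> set F \<subseteq> alphabet i j k"
  using assms(1)
proof (induction rule: rtranclp_induct)
  case base
  then show ?case using assms(3,4) by simp
next
  case (step w w')
  then obtain u x y v r where "w = u @ x # y # v" "w' = u @ r @ v" "alphabet_rule i j k x y r"
    using astep_alphabet_rule[OF assms(2)] by blast
  then show ?case using step alphabet_rule_set assms(5) by auto
qed

section \<open>Terminal words\<close>

lemma append_split_if_no_descent:
  assumes "set w \<subseteq> P \<union> Q" and "\<And>u x y v. w = u @ x # y # v \<Longrightarrow> x \<in> Q \<Longrightarrow> y \<in> P \<Longrightarrow> False"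
  shows "\<exists>bs as. w = bs @ as \<and> set bs \<subseteq> P \<and> set as \<subseteq> Q"
  using assms
proof (induction w)
  case Nil
  then show ?case by auto
next
  case (Cons z w)
  have "\<And>u x y v. w = u @ x # y # v \<Longrightarrow> x \<in> Q \<Longrightarrow> y \<in> P \<Longrightarrow> False"
    using Cons.prems(2) by (metis append_Cons)
  with Cons obtain bs as where w: "w = bs @ as" "set bs \<subseteq> P" "set as \<subseteq> Q" by auto
  consider "z \<in> P" | "z \<in> Q" "bs = []" | b bs' where "z \<in> Q" "bs = b # bs'"
    using Cons.prems(1) by (cases bs) auto
  then show ?case
  proof cases
    case 1
    then show ?thesis using w by (intro exI[of _ "z # bs"] exI[of _ as]) auto
  next
    case 2
    then show ?thesis using w by (intro exI[of _ "[]"] exI[of _ "z # as"]) auto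
  next
    case 3
    then show ?thesis using w Cons.prems(2)[of "[]" z b "bs' @ as"] by auto
  qed
qed

lemma stop_or_arule_Einv_E:
  assumes "distinct [i, j, k]" and "x \<in> {Einv i j, Einv i k}" and "y \<in> {E j i, E j k}"
  shows "stop_pat x y \<or> (\<exists>r. arule x y r)"
proof -
  have ikj: "distinct [i, k, j]" using assms(1) by auto
  from assms(2,3) consider "x = Einv i j" "y = E j i" | "x = Einv i j" "y = E j k"
    | "x = Einv i k" "y = E j i" | "x = Einv i k" "y = E j k" by blast
  then show ?thesis
  proof cases
    case 1
    then show ?thesis using assms(1) unfolding stop_pat_def by auto
  qed (use arule.r3[OF ikj] arule.r4[OF assms(1)] arule.r5[OF ikj] in blast)+
qed

lemma terminal_alphabet_split:
  assumes "distinct [i, j, k]" and "terminal F" and "set F \<subseteq> alphabet i j k"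
  shows "\<exists>bs as. F = bs @ as \<and> set bs \<subseteq> {E j i, E j k} \<and> set as \<subseteq> {Einv i j, Einv i k}"
proof (rule append_split_if_no_descent)
  show "set F \<subseteq> {E j i, E j k} \<union> {Einv i j, Einv i k}"
    using assms(3) unfolding alphabet_def by auto
next
  fix u x y v
  assume "F = u @ x # y # v" "x \<in> {Einv i j, Einv i k}" "y \<in> {E j i, E j k}"
  then have "redex F (length u)"
    using stop_or_arule_Einv_E[OF assms(1)] unfolding redex_def by (simp add: nth_append)
  then show False using assms(2) unfolding terminal_def by blast
qed

section \<open>Invariants of the rewriting\<close>

fun count_pairs :: "'a \<Rightarrow> 'a \<Rightarrow> 'a list \<Rightarrow> nat" where
  "count_pairs a b [] = 0"
| "count_pairs a b (z # zs) = (if z = a then count_list zs b else 0) + count_pairs a b zs"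

lemma count_pairs_append:
  "count_pairs a b (u @ v) = count_pairs a b u + count_pairs a b v + count_list u a * count_list v b"
  by (induction u) (auto simp: algebra_simps)

lemma count_pairs_notin_left: "a \<notin> set w \<Longrightarrow> count_pairs a b w = 0"
  by (induction w) auto

lemma count_pairs_notin_right: "b \<notin> set w \<Longrightarrow> count_pairs a b w = 0"
  by (induction w) (auto simp: count_list_0_iff)

lemma replicate_count_list: "set w \<subseteq> {a} \<Longrightarrow> w = replicate (count_list w a) a"
  by (induction w) auto

text \<open>No rule moves \<open>E\<^sup>-\<^sup>1\<^sub>i\<^sub>j\<close> across \<open>E\<^sub>j\<^sub>i\<close> except the stop rule (1).\<close>
lemma terminal_reachable_count_pairs_0:
  assumes "distinct [i, j, k]" and "(astep sel)\<^sup>*\<^sup>* W F" and "set W \<subseteq> alphabet i j k"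
    and "terminal F"
  shows "count_pairs (Einv i j) (E j i) W = 0"
proof -
  have "count_pairs (Einv i j) (E j i) F = count_pairs (Einv i j) (E j i) W \<and> set F \<subseteq> alphabet i j k"
    by (rule astep_invariant[OF assms(2,1,3)])
      (use assms(1) in \<open>auto simp: alphabet_rule_def count_pairs_append\<close>)
  moreover obtain bs as where "F = bs @ as" "set bs \<subseteq> {E j i, E j k}" "set as \<subseteq> {Einv i j, Einv i k}"
    using terminal_alphabet_split[OF assms(1,4)] calculation by blast
  moreover have "Einv i j \<notin> set bs" "E j i \<notin> set as"
    using calculation(3,4) assms(1) by auto
  ultimately show ?thesis
    by (simp add: count_pairs_append count_pairs_notin_left count_pairs_notin_right)
qed

lemma terminal_reachable_without_Einv_ij:
  assumes "distinct [i, j, k]" and "(astep sel)\<^sup>*\<^sup>* W F"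
    and "set W \<subseteq> {Einv i k, E j i, E j k}" and "terminal F"
  shows "\<exists>bs. F = bs @ replicate (count_list W (Einv i k)) (Einv i k) \<and> set bs \<subseteq> {E j i, E j k}
     \<and> count_list bs (E j i) = count_list W (E j i)
     \<and> count_list bs (E j k) = count_list W (E j k) + count_pairs (Einv i k) (E j i) W"
proof -
  define P where "P w \<longleftrightarrow> set w \<subseteq> {Einv i k, E j i, E j k} \<and>
     count_list w (Einv i k) = count_list W (Einv i k) \<and> count_list w (E j i) = count_list W (E j i) \<and>
     count_list w (E j k) + count_pairs (Einv i k) (E j i) w
       = count_list W (E j k) + count_pairs (Einv i k) (E j i) W" for w
  have "P F \<and> set F \<subseteq> alphabet i j k"
    by (rule astep_invariant[OF assms(2,1)])
      (use assms(1,3) in \<open>auto simp: P_def alphabet_def alphabet_rule_def count_pairs_append\<close>)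
  then have PF: "P F" and "set F \<subseteq> alphabet i j k" by auto
  then obtain bs as where F: "F = bs @ as" "set bs \<subseteq> {E j i, E j k}" "set as \<subseteq> {Einv i j, Einv i k}"
    using terminal_alphabet_split[OF assms(1,4)] by blast
  have as: "set as \<subseteq> {Einv i k}" using PF F assms(1) unfolding P_def by auto
  have notin: "Einv i k \<notin> set bs" "E j i \<notin> set as" "E j k \<notin> set as" using F as assms(1) by auto
  have "as = replicate (count_list W (Einv i k)) (Einv i k)"
    using replicate_count_list[OF as] PF F notin unfolding P_def by simp
  moreover have "count_pairs (Einv i k) (E j i) F = 0"
    using F notin by (simp add: count_pairs_append count_pairs_notin_left count_pairs_notin_right)
  ultimately show ?thesis using PF F notin unfolding P_def by auto
qed

text \<open>\<open>residue a a' b n w\<close> is what remains of w once every b of w, and n further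
  b's to its right, have been moved to the left through it, where moving b past a
  creates a new a' (as \<open>E\<^sub>j\<^sub>k\<close> passing \<open>E\<^sup>-\<^sup>1\<^sub>i\<^sub>j\<close> creates \<open>E\<^sup>-\<^sup>1\<^sub>i\<^sub>k\<close> in rule (4)) and moving b past a'
  changes nothing.\<close>
fun residue :: "'a \<Rightarrow> 'a \<Rightarrow> 'a \<Rightarrow> nat \<Rightarrow> 'a list \<Rightarrow> 'a list" where
  "residue a a' b n [] = []"
| "residue a a' b n (z # zs) =
     (if z = a then replicate (count_list zs b + n) a' @ [a] else if z = a' then [a'] else [])
     @ residue a a' b n zs"

lemma residue_append:
  "residue a a' b n (u @ v) = residue a a' b (n + count_list v b) u @ residue a a' b n v"
  by (induction u) (auto simp: algebra_simps)

lemma residue_without_b: "b \<notin> set w \<Longrightarrow> set w \<subseteq> {a, a'} \<Longrightarrow> residue a a' b 0 w = w"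
  by (induction w) (auto simp: count_list_0_iff)

lemma residue_without_a: "a \<notin> set w \<Longrightarrow> a' \<notin> set w \<Longrightarrow> residue a a' b n w = []"
  by (induction w) auto

lemma terminal_reachable_without_E_ji:
  assumes "distinct [i, j, k]" and "(astep sel)\<^sup>*\<^sup>* W F"
    and "set W \<subseteq> {Einv i j, Einv i k, E j k}" and "terminal F"
  shows "F = replicate (count_list W (E j k)) (E j k) @ residue (Einv i j) (Einv i k) (E j k) 0 W"
proof -
  define P where "P w \<longleftrightarrow> set w \<subseteq> {Einv i j, Einv i k, E j k} \<and>
     count_list w (E j k) = count_list W (E j k) \<and>
     residue (Einv i j) (Einv i k) (E j k) 0 w = residue (Einv i j) (Einv i k) (E j k) 0 W" for w
  have "P F \<and> set F \<subseteq> alphabet i j k"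
    by (rule astep_invariant[OF assms(2,1)])
      (use assms(1,3) in \<open>auto simp: P_def alphabet_def alphabet_rule_def residue_append\<close>)
  then have PF: "P F" and "set F \<subseteq> alphabet i j k" by auto
  then obtain bs as where F: "F = bs @ as" "set bs \<subseteq> {E j i, E j k}" "set as \<subseteq> {Einv i j, Einv i k}"
    using terminal_alphabet_split[OF assms(1,4)] by blast
  have bs: "set bs \<subseteq> {E j k}" using PF F assms(1) unfolding P_def by auto
  have notin: "Einv i k \<notin> set bs" "Einv i j \<notin> set bs" "E j k \<notin> set as" using F bs assms(1) by auto
  have "bs = replicate (count_list W (E j k)) (E j k)"
    using replicate_count_list[OF bs] PF F notin unfolding P_def by simp
  moreover have "residue (Einv i j) (Einv i k) (E j k) 0 F = as"
    using F notin by (simp add: residue_append residue_without_a residue_without_b)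
  ultimately show ?thesis using PF F unfolding P_def by simp
qed

section \<open>Rule (8)\<close>

lemma rule8_swap: "distinct [a, b, c] \<Longrightarrow> rule8 (u @ E a b # E a c # v) (u @ E a c # E a b # v)"
  unfolding rule8_iff by blast

lemma rule8_sym: "rule8 w w' \<Longrightarrow> rule8 w' w"
proof -
  assume "rule8 w w'"
  then obtain u a b c v where "distinct [a, b, c]"
    "w = u @ E a b # E a c # v" "w' = u @ E a c # E a b # v"
    unfolding rule8_iff by blast
  moreover have "distinct [a, c, b]" using calculation(1) by auto
  ultimately show "rule8 w' w" using rule8_swap by simp
qed

lemma rule8_Cons: "rule8 w w' \<Longrightarrow> rule8 (z # w) (z # w')"
proof -
  assume "rule8 w w'"
  then obtain u a b c v where "distinct [a, b, c]"
    "w = u @ E a b # E a c # v" "w' = u @ E a c # E a b # v"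
    unfolding rule8_iff by blast
  then show ?thesis using rule8_swap[of a b c "z # u" v] by simp
qed

lemma eq8_sym: "eq8 w w' \<Longrightarrow> eq8 w' w"
  unfolding eq8_def by (metis symp_rtranclp sympD sympI rule8_sym)

lemma eq8_trans [trans]: "eq8 u v \<Longrightarrow> eq8 v w \<Longrightarrow> eq8 u w"
  unfolding eq8_def by (rule rtranclp_trans)

lemma eq8_Cons: "eq8 w w' \<Longrightarrow> eq8 (z # w) (z # w')"
  unfolding eq8_def
proof (induction rule: rtranclp_induct)
  case (step w' w'')
  from step.IH rule8_Cons[OF step.hyps(2)] show ?case by (rule rtranclp.rtrancl_into_rtrancl)
qed simp

lemma eq8_move_right: "distinct [a, b, c] \<Longrightarrow>
   eq8 (E a b # replicate n (E a c) @ s) (replicate n (E a c) @ E a b # s)"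
proof (induction n)
  case (Suc n)
  have "eq8 (E a b # E a c # replicate n (E a c) @ s) (E a c # E a b # replicate n (E a c) @ s)"
    using rule8_swap[OF Suc.prems, of "[]"] unfolding eq8_def by (simp add: r_into_rtranclp)
  also have "eq8 \<dots> (E a c # replicate n (E a c) @ E a b # s)"
    using Suc by (intro eq8_Cons)
  finally show ?case by simp
qed (simp add: eq8_def)

lemma eq8_sort: "distinct [a, b, c] \<Longrightarrow> set w \<subseteq> {E a b, E a c} \<Longrightarrow>
  eq8 (w @ s) (replicate (count_list w (E a c)) (E a c) @ replicate (count_list w (E a b)) (E a b) @ s)"
proof (induction w)
  case (Cons z w)
  have ne: "E a b \<noteq> E a c" using Cons.prems(1) by auto
  let ?sorted = "\<lambda>u. replicate (count_list w (E a c)) (E a c) @ u @ replicate (count_list w (E a b)) (E a b) @ s"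
  have "eq8 (w @ s) (?sorted [])"
    using Cons.IH Cons.prems by simp
  then have IH: "eq8 (z # w @ s) (z # ?sorted [])"
    by (rule eq8_Cons)
  show ?case
  proof (cases "z = E a c")
    case True
    then show ?thesis using IH ne by simp
  next
    case False
    then have z: "z = E a b" using Cons.prems(2) by auto
    have "eq8 (z # ?sorted []) (?sorted [z])"
      using eq8_move_right[OF Cons.prems(1)] z by simp
    with IH have "eq8 (z # w @ s) (?sorted [z])" by (rule eq8_trans)
    then show ?thesis using z ne by simp
  qed
qed (simp add: eq8_def)

lemma factorizations_eq8:
  assumes "distinct [i, j, k]" and "W = u @ v"
    and "set u \<subseteq> {Einv i j, Einv i k}" and "set v \<subseteq> {E j i, E j k}"
    and "factorization sel W F1" and "factorization sel W F2"
  shows "eq8 F1 F2"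
proof -
  have W: "set W \<subseteq> alphabet i j k" using assms(2-4) unfolding alphabet_def by auto
  have run: "(astep sel)\<^sup>*\<^sup>* W F1" "terminal F1" "(astep sel)\<^sup>*\<^sup>* W F2" "terminal F2"
    using assms(5,6) unfolding factorization_def by auto
  consider "Einv i j \<notin> set W" | "E j i \<notin> set W" | "Einv i j \<in> set u" "E j i \<in> set v"
    using assms(1-4) by auto
  then show ?thesis
  proof cases
    case 1
    let ?n = "\<lambda>x. count_list W x"
    let ?c = "?n (E j k) + count_pairs (Einv i k) (E j i) W"
    let ?G = "replicate (?n (E j i)) (E j i) @ replicate ?c (E j k) @ replicate (?n (Einv i k)) (Einv i k)"
    have W': "set W \<subseteq> {Einv i k, E j i, E j k}" using 1 W unfolding alphabet_def by auto
    have "distinct [j, k, i]" using assms(1) by auto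
    then have "eq8 F ?G" if "(astep sel)\<^sup>*\<^sup>* W F" "terminal F" for F
      using terminal_reachable_without_Einv_ij[OF assms(1) that(1) W' that(2)] eq8_sort by force
    then have "eq8 F1 ?G" "eq8 ?G F2" using run eq8_sym by blast+
    then show ?thesis by (rule eq8_trans)
  next
    case 2
    then have "set W \<subseteq> {Einv i j, Einv i k, E j k}" using W unfolding alphabet_def by auto
    then have "F1 = F2" using terminal_reachable_without_E_ji[OF assms(1)] run by metis
    then show ?thesis by (simp add: eq8_def)
  next
    case 3
    then have "count_pairs (Einv i j) (E j i) W \<noteq> 0"
      using assms(2) by (auto simp: count_pairs_append count_list_0_iff)
    then show ?thesis using terminal_reachable_count_pairs_0[OF assms(1) run(1) W run(2)] by blast
  qed
qed

lemma directed_set: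
  assumes "distinct [i, j, k]"
  shows "directed i S \<longleftrightarrow> set S \<subseteq> {E i j, E i k}"
  using idx_cases3[OF assms] assms unfolding directed_def by fastforce

lemma set_inv_word: "set (inv_word S) = inv_letter ` set S"
  by (simp add: inv_word_def)

lemma inv_word_inv_word: "inv_word (inv_word w) = w"
proof -
  have "inv_letter (inv_letter x) = x" for x by (cases x) auto
  then show ?thesis by (simp add: inv_word_def rev_map comp_def)
qed

lemma factorization_directed_form:
  assumes "distinct [i, j, k]" and "factorization sel W F" and "set W \<subseteq> alphabet i j k"
  shows "\<exists>T1 S1. F = T1 @ inv_word S1 \<and> directed i S1 \<and> directed j T1"
proof -
  have run: "(astep sel)\<^sup>*\<^sup>* W F" "terminal F" using assms(2) unfolding factorization_def by auto
  have "True \<and> set F \<subseteq> alphabet i j k" by (rule astep_invariant[OF run(1) assms(1,3)]) simp_all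
  then obtain bs as where "F = bs @ as" and bs: "set bs \<subseteq> {E j i, E j k}"
    and as: "set as \<subseteq> {Einv i j, Einv i k}"
    using terminal_alphabet_split[OF assms(1) run(2)] by blast
  then have "F = bs @ inv_word (inv_word as)" by (simp add: inv_word_inv_word)
  moreover have "directed i (inv_word as)"
    using as unfolding directed_set[OF assms(1)] set_inv_word by auto
  moreover have "directed j bs" using bs directed_set[of j i k] assms(1) by auto
  ultimately show ?thesis by blast
qed

theorem proposition3p1:
  fixes i j :: idx and S T :: word and sel :: "word \<Rightarrow> nat"
  assumes "i \<noteq> j"
    and "directed i S" and "directed j T"
    and "admissible_order sel"
  shows "(\<forall>F1 F2. factorization sel (inv_word S @ T) F1 \<and>
                  factorization sel (inv_word S @ T) F2 \<longrightarrow> eq8 F1 F2)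
       \<and> (\<forall>F. factorization sel (inv_word S @ T) F \<longrightarrow>
              (\<exists>T1 S1. F = T1 @ inv_word S1 \<and> directed i S1 \<and> directed j T1))"
  \<comment> \<open>The invariants hold whatever place a rule is applied at.\<close>
proof -
  obtain k where ijk: "distinct [i, j, k]" using ex_third_idx[OF assms(1)] by blast
  then have jik: "distinct [j, i, k]" by auto
  have S: "set (inv_word S) \<subseteq> {Einv i j, Einv i k}"
    using assms(2) unfolding directed_set[OF ijk] set_inv_word by auto
  have T: "set T \<subseteq> {E j i, E j k}" using assms(3) unfolding directed_set[OF jik] .
  then have "set (inv_word S @ T) \<subseteq> alphabet i j k" using S unfolding alphabet_def by auto
  then show ?thesis
    using factorizations_eq8[OF ijk refl S T] factorization_directed_form[OF ijk] by blast
qed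

end
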